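(* Every connected threshold graph is detour covered, and every $2$-connected threshold graph is cummerbund covered.
   Context: All graphs are finite and simple. A graph $G$ is a threshold graph if there exist a function $f:V(G)\to\mathbb{R}_{\ge 0}$ and a real number $t\ge 0$ such that for any two distinct vertices $u,v$, $u$ and $v$ are adjacent if and only if $f(u)+f(v)>t$. A detour (resp. cummerbund) of a graph is a longest path (resp. longest cycle) in it. A graph is detour covered (resp. cummerbund covered) if every vertex lies in some detour (resp. cummerbund). *)

theory Defs
  imports Complex_Main
begin

definition simple_graph :: "'a set \<Rightarrow> ('a \<Rightarrow> 'a \<Rightarrow> bool) \<Rightarrow> bool" where
  "simple_graph V E \<longleftrightarrow> finite V \<and> (\<forall>u v. E u v \<longrightarrow> E v u)
     \<and> (\<forall>v. \<not> E v v) \<and> (\<forall>u v. E u v \<longrightarrow> u \<in> V \<and> v \<in> V)"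

definition threshold_graph :: "'a set \<Rightarrow> ('a \<Rightarrow> 'a \<Rightarrow> bool) \<Rightarrow> bool" where
  "threshold_graph V E \<longleftrightarrow> (\<exists>(f::'a \<Rightarrow> real) (t::real). t \<ge> 0 \<and> (\<forall>v\<in>V. f v \<ge> 0) \<and>
     (\<forall>u\<in>V. \<forall>v\<in>V. u \<noteq> v \<longrightarrow> (E u v \<longleftrightarrow> f u + f v > t)))"

definition is_path :: "'a set \<Rightarrow> ('a \<Rightarrow> 'a \<Rightarrow> bool) \<Rightarrow> 'a list \<Rightarrow> bool" where
  "is_path V E xs \<longleftrightarrow> xs \<noteq> [] \<and> distinct xs \<and> set xs \<subseteq> V \<and>
     (\<forall>i. Suc i < length xs \<longrightarrow> E (xs ! i) (xs ! Suc i))"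

definition is_cycle :: "'a set \<Rightarrow> ('a \<Rightarrow> 'a \<Rightarrow> bool) \<Rightarrow> 'a list \<Rightarrow> bool" where
  "is_cycle V E xs \<longleftrightarrow> length xs \<ge> 3 \<and> is_path V E xs \<and> E (last xs) (hd xs)"

definition detour :: "'a set \<Rightarrow> ('a \<Rightarrow> 'a \<Rightarrow> bool) \<Rightarrow> 'a list \<Rightarrow> bool" where
  "detour V E xs \<longleftrightarrow> is_path V E xs \<and> (\<forall>ys. is_path V E ys \<longrightarrow> length ys \<le> length xs)"

definition cummerbund :: "'a set \<Rightarrow> ('a \<Rightarrow> 'a \<Rightarrow> bool) \<Rightarrow> 'a list \<Rightarrow> bool" where
  "cummerbund V E xs \<longleftrightarrow> is_cycle V E xs \<and> (\<forall>ys. is_cycle V E ys \<longrightarrow> length ys \<le> length xs)"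

definition detour_covered :: "'a set \<Rightarrow> ('a \<Rightarrow> 'a \<Rightarrow> bool) \<Rightarrow> bool" where
  "detour_covered V E \<longleftrightarrow> (\<forall>v\<in>V. \<exists>xs. detour V E xs \<and> v \<in> set xs)"

definition cummerbund_covered :: "'a set \<Rightarrow> ('a \<Rightarrow> 'a \<Rightarrow> bool) \<Rightarrow> bool" where
  "cummerbund_covered V E \<longleftrightarrow> (\<forall>v\<in>V. \<exists>xs. cummerbund V E xs \<and> v \<in> set xs)"

definition graph_connected :: "'a set \<Rightarrow> ('a \<Rightarrow> 'a \<Rightarrow> bool) \<Rightarrow> bool" where
  "graph_connected V E \<longleftrightarrow> V \<noteq> {} \<and>
     (\<forall>u\<in>V. \<forall>v\<in>V. \<exists>xs. is_path V E xs \<and> hd xs = u \<and> last xs = v)"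

definition two_connected :: "'a set \<Rightarrow> ('a \<Rightarrow> 'a \<Rightarrow> bool) \<Rightarrow> bool" where
  "two_connected V E \<longleftrightarrow> card V \<ge> 3 \<and> graph_connected V E \<and>
     (\<forall>x\<in>V. graph_connected (V - {x}) E)"

end

theory Submission
  imports Defs
begin

(* Fix threshold weights f and a lightest vertex z. If f w <= f u, every neighbour of w other
   than u is a neighbour of u; hence z can be exchanged for any vertex outside a longest path or
   cycle through z, and it suffices to find one through z. Every neighbour y of z is adjacent to
   all other vertices. Removing a vertex from a path loses at most two vertices: the two pieces
   are glued after dropping the lighter of the two ends being joined. So removing y from a
   longest path and putting z y in front, or removing two neighbours y, y' of z from a longest
   cycle and closing the rest through y, z, y', gives a longest path or cycle through z. *)

lemma is_path_iff_successively:
  "is_path V E xs \<longleftrightarrow> xs \<noteq> [] \<and> distinct xs \<and> set xs \<subseteq> V \<and> successively E xs"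
  by (auto simp: is_path_def successively_conv_nth)

lemma length_path_le_card:
  assumes "finite V" "is_path V E xs"
  shows "length xs \<le> card V"
  using assms by (metis card_mono distinct_card is_path_iff_successively)

lemma detour_exists:
  assumes "finite V" "is_path V E xs"
  obtains P where "detour V E P"
  using ex_has_greatest_nat[of "is_path V E" xs length "Suc (card V)"]
    assms length_path_le_card that
  by (fastforce simp: detour_def less_Suc_eq_le)

lemma cummerbund_exists:
  assumes "finite V" "is_cycle V E xs"
  obtains C where "cummerbund V E C"
  using ex_has_greatest_nat[of "is_cycle V E" xs length "Suc (card V)"]
    assms length_path_le_card that
  by (fastforce simp: cummerbund_def is_cycle_def less_Suc_eq_le)

lemma is_cycle_rotate:
  assumes "is_cycle V E (A @ B)"
  shows "is_cycle V E (B @ A)"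
proof (cases "A = [] \<or> B = []")
  case True
  then show ?thesis using assms by auto
next
  case False
  then show ?thesis using assms
    by (auto simp: is_cycle_def is_path_iff_successively successively_append_iff)
qed

lemma is_cycle_rotate_to:
  assumes "is_cycle V E C" "x \<in> set C"
  obtains X where "is_cycle V E (x # X)" "set (x # X) = set C" "length (x # X) = length C"
proof -
  obtain L R where C: "C = L @ x # R" using assms(2) by (meson split_list)
  have "is_cycle V E ((x # R) @ L)" using is_cycle_rotate assms(1) C by blast
  then show ?thesis using that[of "R @ L"] C by auto
qed

lemma cycle_delete_vertex:
  assumes "is_cycle V E C"
  obtains X where "distinct X" "successively E X" "set X \<subseteq> set C - {x}"
    "length C \<le> length X + 1"
proof (cases "x \<in> set C")
  case True
  then obtain X where X: "is_cycle V E (x # X)" "set (x # X) = set C"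
    "length (x # X) = length C"
    using is_cycle_rotate_to assms by metis
  then have "distinct (x # X)" "successively E X"
    by (auto simp: is_cycle_def is_path_iff_successively successively_Cons)
  with X show ?thesis by (intro that[of X]) auto
next
  case False
  then show ?thesis using that assms by (auto simp: is_cycle_def is_path_iff_successively)
qed

lemma connected_adj_exists:
  assumes "graph_connected V E" "u \<in> V" "w \<in> V" "u \<noteq> w"
  obtains x where "x \<in> V" "E u x"
proof -
  obtain xs where xs: "is_path V E xs" "hd xs = u" "last xs = w"
    using assms unfolding graph_connected_def by blast
  then obtain r where r: "xs = u # r" by (cases xs) (auto simp: is_path_def)
  with xs assms(4) obtain x r' where "r = x # r'" by (cases r) auto
  then show ?thesis using that xs r by (auto simp: is_path_iff_successively)
qed

lemma card_ge_3_obtain_other: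
  assumes "finite A" "card A \<ge> 3"
  obtains x where "x \<in> A" "x \<noteq> a" "x \<noteq> b"
proof -
  have "card {a, b} \<le> 2" by (cases "a = b") auto
  then have "\<not> A \<subseteq> {a, b}" using card_mono[of "{a, b}" A] assms(2) by auto
  then show ?thesis using that by blast
qed

locale weighted_threshold_graph =
  fixes V :: "'a set" and E :: "'a \<Rightarrow> 'a \<Rightarrow> bool" and f :: "'a \<Rightarrow> real" and t :: real
  assumes simple: "simple_graph V E"
    and adj_iff: "\<And>u v. u \<in> V \<Longrightarrow> v \<in> V \<Longrightarrow> u \<noteq> v \<Longrightarrow> E u v \<longleftrightarrow> f u + f v > t"
begin

lemma finite_vertices: "finite V"
  and adj_sym: "E u v \<Longrightarrow> E v u"
  and adj_irrefl: "\<not> E v v"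
  and adj_in_vertices: "E u v \<Longrightarrow> u \<in> V" "E u v \<Longrightarrow> v \<in> V"
  using simple by (auto simp: simple_graph_def)

definition lightest :: "'a \<Rightarrow> bool" where
  "lightest z \<longleftrightarrow> z \<in> V \<and> (\<forall>v\<in>V. f z \<le> f v)"

lemma lightest_exists:
  assumes "V \<noteq> {}"
  obtains z where "lightest z"
  using ex_is_arg_min_if_finite[OF finite_vertices assms, of f] that
  by (force simp: lightest_def is_arg_min_def)

lemma adj_if_heavier:
  assumes "u \<in> V" "f w \<le> f u" "E w x" "x \<noteq> u"
  shows "E u x"
proof -
  have "w \<in> V" "x \<in> V" "w \<noteq> x" using assms adj_in_vertices adj_irrefl by auto
  then have "f w + f x > t" using adj_iff assms(3) by blast
  then show ?thesis using adj_iff assms \<open>x \<in> V\<close> by force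
qed

lemma adj_neighbour_of_lightest:
  assumes "lightest z" "E z y" "w \<in> V" "w \<noteq> y"
  shows "E w y"
  using adj_if_heavier[of w z y] assms by (auto simp: lightest_def)

lemma path_replace_vertex:
  assumes "is_path V E (L @ w # R)" "u \<in> V" "u \<notin> set (L @ w # R)" "f w \<le> f u"
  shows "is_path V E (L @ u # R)"
proof -
  have "E x u" if "E x w" "x \<noteq> u" for x
    using adj_if_heavier[of u w x] adj_sym that assms by blast
  moreover have "E u x" if "E w x" "x \<noteq> u" for x
    using adj_if_heavier[of u w x] that assms by blast
  moreover have "L \<noteq> [] \<Longrightarrow> last L \<noteq> u" "R \<noteq> [] \<Longrightarrow> hd R \<noteq> u" using assms(3) by auto
  ultimately show ?thesis using assms
    by (auto simp: is_path_iff_successively successively_append_iff successively_Cons)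
qed

lemma cycle_replace_hd:
  assumes "is_cycle V E (w # X)" "u \<in> V" "u \<notin> set (w # X)" "f w \<le> f u"
  shows "is_cycle V E (u # X)"
proof -
  have "is_path V E (u # X)"
    using path_replace_vertex[of "[]" w X u] assms by (auto simp: is_cycle_def)
  moreover have "X \<noteq> []" "E (last X) w"
    using assms(1) by (auto simp: is_cycle_def split: if_splits)
  moreover have "last X \<noteq> u" using \<open>X \<noteq> []\<close> assms(3) by auto
  ultimately show ?thesis
    using adj_if_heavier[of u w "last X"] adj_sym assms by (auto simp: is_cycle_def)
qed

lemma join_paths:
  assumes "distinct (M @ N)" "set (M @ N) \<subseteq> V" "successively E M" "successively E N"
  obtains W where "distinct W" "set W \<subseteq> set M \<union> set N" "successively E W"
    "length M + length N \<le> length W + 1"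
proof (cases "M = [] \<or> N = []")
  case True
  then show ?thesis using that[of N] that[of M] assms by auto
next
  case False
  then obtain a M' where M: "M = a # M'" by (metis list.exhaust)
  obtain N' b where N: "N = N' @ [b]" using False by (metis rev_exhaust)
  have ab: "a \<in> V" "b \<in> V" "a \<noteq> b" using assms(1,2) M N by auto
  show ?thesis
  proof (cases "f b \<le> f a")
    case True
    have "E (last N') a" if "N' \<noteq> []"
    proof -
      have "E (last N') b" using assms(4) that unfolding N by (simp add: successively_append_iff)
      moreover have "last N' \<noteq> a" using assms(1) that unfolding M N by auto
      ultimately show ?thesis using adj_if_heavier[OF ab(1) True] adj_sym by blast
    qed
    then have "successively E (N' @ a # M')"
      using assms(3,4) unfolding M N by (auto simp: successively_append_iff)
    then show ?thesis using that[of "N' @ a # M'"] assms(1) unfolding M N by auto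
  next
    case False
    have "E b (hd M')" if "M' \<noteq> []"
    proof -
      have "E a (hd M')" using assms(3) that unfolding M by (simp add: successively_Cons)
      moreover have "hd M' \<noteq> b" using assms(1) that unfolding M N by auto
      ultimately show ?thesis using adj_if_heavier[OF ab(2), of a] False by simp
    qed
    then have "successively E (N' @ b # M')"
      using assms(3,4) unfolding M N by (auto simp: successively_append_iff successively_Cons)
    then show ?thesis using that[of "N' @ b # M'"] assms(1) unfolding M N by auto
  qed
qed

lemma path_delete_vertex:
  assumes "distinct P" "set P \<subseteq> V" "successively E P"
  obtains W where "distinct W" "successively E W" "set W \<subseteq> set P - {x}"
    "length P \<le> length W + 2"
proof (cases "x \<in> set P")
  case True
  then obtain L R where P: "P = L @ x # R" by (meson split_list)
  have "distinct (L @ R)" "set (L @ R) \<subseteq> V" "successively E L" "successively E R"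
    using assms unfolding P by (auto simp: successively_append_iff successively_Cons)
  then obtain W where "distinct W" "set W \<subseteq> set L \<union> set R" "successively E W"
    "length L + length R \<le> length W + 1"
    by (rule join_paths)
  then show ?thesis using that[of W] assms(1) unfolding P by auto
next
  case False
  then show ?thesis using that[of P] assms by auto
qed

lemma detour_through_lightest:
  assumes z: "lightest z" and zy: "E z y" and P: "detour V E P"
  obtains Q where "detour V E Q" "z \<in> set Q"
proof (cases "z \<in> set P")
  case True
  then show ?thesis using that P by blast
next
  case False
  have "distinct P" and PV: "set P \<subseteq> V" and "successively E P"
    using P by (auto simp: detour_def is_path_iff_successively)
  then obtain W where W: "distinct W" "successively E W" "set W \<subseteq> set P - {y}"
    "length P \<le> length W + 2"
    by (rule path_delete_vertex)
  have zV: "z \<in> V" and yV: "y \<in> V" and "z \<noteq> y"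
    using z zy adj_in_vertices adj_irrefl by (auto simp: lightest_def)
  have "E y (hd W)" if "W \<noteq> []"
  proof -
    have "hd W \<in> V - {y}" using W(3) PV hd_in_set[OF that] by blast
    then show ?thesis using adj_neighbour_of_lightest[OF z zy] adj_sym by blast
  qed
  then have "successively E (z # y # W)" using zy W(2) by (cases W) auto
  moreover have "distinct (z # y # W)" using W(1,3) False \<open>z \<noteq> y\<close> by auto
  moreover have "set (z # y # W) \<subseteq> V" using W(3) PV zV yV by auto
  ultimately have "is_path V E (z # y # W)" by (simp add: is_path_iff_successively)
  moreover have "length P \<le> length (z # y # W)" using W(4) by simp
  ultimately have "detour V E (z # y # W)" using P unfolding detour_def by (meson le_trans)
  then show ?thesis using that by simp
qed

lemma cycle_through_lightest:
  assumes z: "lightest z" and zy: "E z y" and zy': "E z y'" and "y \<noteq> y'"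
    and W: "distinct W" "successively E W" "set W \<subseteq> V - {y, y', z}"
  shows "is_cycle V E (y' # W @ [y, z])"
proof -
  have to_y: "E w y" if "w \<in> V" "w \<noteq> y" for w
    using adj_neighbour_of_lightest[OF z zy that] .
  have from_y': "E y' w" if "w \<in> V" "w \<noteq> y'" for w
    using adj_neighbour_of_lightest[OF z zy' that] adj_sym by blast
  have "successively E (y' # W @ [y, z])"
  proof (cases "W = []")
    case True
    then show ?thesis using from_y' adj_in_vertices zy adj_sym assms(4) by auto
  next
    case False
    then have "hd W \<in> V - {y, y', z}" "last W \<in> V - {y, y', z}"
      using W(3) hd_in_set[OF False] last_in_set[OF False] by blast+
    then have "E y' (hd W)" "E (last W) y" using to_y from_y' by auto
    then show ?thesis using False W zy adj_sym
      by (auto simp: successively_append_iff successively_Cons)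
  qed
  then show ?thesis using W zy zy' assms(4) adj_sym adj_irrefl adj_in_vertices
    by (auto simp: is_cycle_def is_path_iff_successively)
qed

lemma cummerbund_through_lightest:
  assumes z: "lightest z" and zy: "E z y" and zy': "E z y'" and "y \<noteq> y'"
    and C: "cummerbund V E C"
  obtains Q where "cummerbund V E Q" "z \<in> set Q"
proof (cases "z \<in> set C")
  case True
  then show ?thesis using that C by blast
next
  case False
  have "is_cycle V E C" using C by (simp add: cummerbund_def)
  then obtain X where X: "distinct X" "successively E X" "set X \<subseteq> set C - {y}"
    "length C \<le> length X + 1"
    by (rule cycle_delete_vertex)
  have "set C \<subseteq> V" using C by (auto simp: cummerbund_def is_cycle_def is_path_def)
  with X(3) have "set X \<subseteq> V" by auto
  with X(1,2) obtain W where W: "distinct W" "successively E W" "set W \<subseteq> set X - {y'}"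
    "length X \<le> length W + 2"
    using path_delete_vertex by blast
  have "is_cycle V E (y' # W @ [y, z])"
    using cycle_through_lightest[OF z zy zy' \<open>y \<noteq> y'\<close> W(1,2)] W(3) X(3) False \<open>set C \<subseteq> V\<close>
    by blast
  moreover have "length C \<le> length (y' # W @ [y, z])" using X(4) W(4) by simp
  ultimately have "cummerbund V E (y' # W @ [y, z])" using C by (force simp: cummerbund_def)
  then show ?thesis using that by simp
qed

lemma detour_covered_if_lightest_on_detour:
  assumes z: "lightest z" and Q: "detour V E Q" "z \<in> set Q"
  shows "detour_covered V E"
  unfolding detour_covered_def
proof
  fix v assume v: "v \<in> V"
  show "\<exists>xs. detour V E xs \<and> v \<in> set xs"
  proof (cases "v \<in> set Q")
    case False
    obtain L R where LR: "Q = L @ z # R" using Q(2) by (meson split_list)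
    have "is_path V E (L @ v # R)"
      using path_replace_vertex[of L z R v] v z Q(1) False LR
      by (auto simp: detour_def lightest_def)
    then have "detour V E (L @ v # R)" using Q(1) LR by (auto simp: detour_def)
    then show ?thesis by auto
  qed (use Q in blast)
qed

lemma cummerbund_covered_if_lightest_on_cummerbund:
  assumes z: "lightest z" and C: "cummerbund V E C" "z \<in> set C"
  shows "cummerbund_covered V E"
  unfolding cummerbund_covered_def
proof
  fix v assume v: "v \<in> V"
  show "\<exists>xs. cummerbund V E xs \<and> v \<in> set xs"
  proof (cases "v \<in> set C")
    case False
    obtain X where X: "is_cycle V E (z # X)" "set (z # X) = set C" "length (z # X) = length C"
      using is_cycle_rotate_to C by (metis cummerbund_def)
    then have "is_cycle V E (v # X)"
      using cycle_replace_hd[of z X v] v z False by (auto simp: lightest_def)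
    then have "cummerbund V E (v # X)" using C(1) X(3) by (auto simp: cummerbund_def)
    then show ?thesis by auto
  qed (use C in blast)
qed

lemma detour_covered_if_connected:
  assumes conn: "graph_connected V E"
  shows "detour_covered V E"
proof -
  obtain z where z: "lightest z"
    using lightest_exists conn by (auto simp: graph_connected_def)
  then have zV: "z \<in> V" by (simp add: lightest_def)
  obtain Q where "detour V E Q" "z \<in> set Q"
  proof (cases "\<exists>y. E z y")
    case True
    then obtain y where "E z y" ..
    obtain P where "detour V E P"
      using detour_exists[OF finite_vertices, of E "[z]"] zV by (auto simp: is_path_def)
    then show ?thesis using detour_through_lightest[OF z \<open>E z y\<close>] that by blast
  next
    case False
    then have "V = {z}" using connected_adj_exists[OF conn zV] zV by blast
    then have "detour V E [z]"
      using length_path_le_card[OF finite_vertices] by (auto simp: detour_def is_path_def)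
    then show ?thesis using that by simp
  qed
  then show ?thesis using detour_covered_if_lightest_on_detour[OF z] by blast
qed

lemma cummerbund_covered_if_two_connected:
  assumes "two_connected V E"
  shows "cummerbund_covered V E"
proof -
  have card: "card V \<ge> 3" and conn: "graph_connected V E"
    and conn_minus: "\<And>x. x \<in> V \<Longrightarrow> graph_connected (V - {x}) E"
    using assms by (auto simp: two_connected_def)
  obtain z where z: "lightest z"
    using lightest_exists conn by (auto simp: graph_connected_def)
  then have zV: "z \<in> V" by (simp add: lightest_def)
  obtain w where "w \<in> V" "w \<noteq> z"
    using card_ge_3_obtain_other[OF finite_vertices card, of z z] by blast
  then obtain y where yV: "y \<in> V" and zy: "E z y"
    using connected_adj_exists[OF conn zV] by blast
  then have "z \<noteq> y" using adj_irrefl by auto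
  obtain w' where "w' \<in> V" "w' \<noteq> y" "w' \<noteq> z"
    using card_ge_3_obtain_other[OF finite_vertices card, of y z] by blast
  then obtain y' where "y' \<in> V - {y}" and zy': "E z y'"
    using connected_adj_exists[OF conn_minus[OF yV], of z w'] zV \<open>z \<noteq> y\<close> by blast
  then have "y \<noteq> y'" by auto
  have "is_cycle V E [y', y, z]"
    using cycle_through_lightest[OF z zy zy' \<open>y \<noteq> y'\<close>, of "[]"] by simp
  then obtain C where "cummerbund V E C" by (rule cummerbund_exists[OF finite_vertices])
  then obtain Q where "cummerbund V E Q" "z \<in> set Q"
    by (rule cummerbund_through_lightest[OF z zy zy' \<open>y \<noteq> y'\<close>])
  then show ?thesis by (rule cummerbund_covered_if_lightest_on_cummerbund[OF z])
qed

end

theorem corollary13: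
  fixes V :: "'a set" and E :: "'a \<Rightarrow> 'a \<Rightarrow> bool"
  assumes "simple_graph V E" and "threshold_graph V E"
  shows "(graph_connected V E \<longrightarrow> detour_covered V E) \<and>
         (two_connected V E \<longrightarrow> cummerbund_covered V E)"
proof -
  obtain f :: "'a \<Rightarrow> real" and t :: real
    where "\<forall>u\<in>V. \<forall>v\<in>V. u \<noteq> v \<longrightarrow> (E u v \<longleftrightarrow> f u + f v > t)"
    using assms(2) unfolding threshold_graph_def by metis
  then interpret weighted_threshold_graph V E f t
    using assms(1) by unfold_locales auto
  show ?thesis
    using detour_covered_if_connected cummerbund_covered_if_two_connected by blast
qed

end
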